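(* Let $v_1,\ldots,v_r\in\mathbb{Z}^n$ with $\sum_{i=1}^r v_i=0$ and $\mathbf{a}=(a_1,\ldots,a_r)\in\mathbb{Z}^r$ be such that $P=\bigcap_{i=1}^r\{x\in\mathbb{R}^n : \langle v_i,x\rangle+a_i\ge 0\}$ is compact and each hyperplane $H_i=\{x:\langle v_i,x\rangle+a_i=0\}$ meets $P$. Then the function $\phi_{\mathbf{a}}:P\to\mathbb{R}_{>0}$, $\phi_{\mathbf{a}}(x)=\prod_{i=1}^r(\langle v_i,x\rangle+a_i)^{\langle v_i,x\rangle+a_i}$ (with $0^0=1$), is convex on $P$, and there is a unique point $m_{\mathbf{a}}$ in the relative interior of $P$ minimizing $\phi_{\mathbf{a}}$.
   Context: The relative interior of $P$ is the interior of $P$ viewed as a subset of the affine span of $P$. *)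

theory Defs
  imports "HOL-Analysis.Analysis"
begin

text \<open>Self-power t^t with the convention 0^0 = 1 (Isabelle's powr has 0 powr 0 = 0).\<close>
definition selfpow :: "real \<Rightarrow> real" where
  "selfpow t = (if t = 0 then 1 else t powr t)"

definition polyP :: "nat \<Rightarrow> (nat \<Rightarrow> real ^ 'n) \<Rightarrow> (nat \<Rightarrow> int) \<Rightarrow> (real ^ 'n) set" where
  "polyP r v a = {x. \<forall>i<r. v i \<bullet> x + of_int (a i) \<ge> 0}"

definition phiA :: "nat \<Rightarrow> (nat \<Rightarrow> real ^ 'n) \<Rightarrow> (nat \<Rightarrow> int) \<Rightarrow> real ^ 'n \<Rightarrow> real" where
  "phiA r v a x = (\<Prod>i<r. selfpow (v i \<bullet> x + of_int (a i)))"

end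

theory Submission
  imports Defs
begin

(* On P we have phiA = exp G with G x = (\<Sum>i. \<ell>\<^sub>i x * ln (\<ell>\<^sub>i x)), \<ell>\<^sub>i the slacks
   of the defining inequalities. Since t ln t is strictly convex on [0,\<infinity>), G and hence
   phiA are convex; as P is bounded, x \<mapsto> (\<ell>\<^sub>i x)\<^sub>i is injective, so G is even strictly
   convex and has at most one minimizer, which exists by compactness. Because t ln t has
   slope -\<infinity> at 0, moving from a point with \<ell>\<^sub>i = 0 towards a point with \<ell>\<^sub>i > 0
   decreases G; so a facet that is tight at the minimizer is tight on all of P, which puts
   the minimizer in the relative interior. *)

definition xlnx :: "real \<Rightarrow> real" where
  "xlnx t = t * ln t"

lemma xlnx_tangent_line_strict:
  assumes "m > 0" "x \<ge> 0" "x \<noteq> m"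
  shows "xlnx m + (ln m + 1) * (x - m) < xlnx x"
proof (cases "x = 0")
  case True
  then show ?thesis using assms by (simp add: xlnx_def algebra_simps)
next
  case False
  with assms have x: "x > 0" by simp
  have "ln (m / x) < m / x - 1"
    using ln_le_minus_one[of "m / x"] ln_eq_minus_one[of "m / x"] x assms by force
  then have "x * (ln m - ln x) < x * (m / x - 1)"
    using x assms by (simp add: ln_div)
  then show ?thesis
    using x by (simp add: xlnx_def algebra_simps)
qed

lemma xlnx_strictly_convex:
  assumes "x \<ge> 0" "y \<ge> 0" "x \<noteq> y" "0 < t" "t < 1"
  shows "xlnx ((1 - t) * x + t * y) < (1 - t) * xlnx x + t * xlnx y"
proof -
  define z where "z = (1 - t) * x + t * y"
  have "z - x = t * (y - x)" "z - y = (1 - t) * (x - y)"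
    unfolding z_def by algebra+
  with assms have "z \<noteq> x" "z \<noteq> y" by auto
  have "z > 0"
    unfolding z_def using assms by (cases "x = 0") (auto intro: add_pos_nonneg add_nonneg_pos)
  let ?tangent = "\<lambda>s. xlnx z + (ln z + 1) * (s - z)"
  have "(1 - t) * ?tangent x < (1 - t) * xlnx x" "t * ?tangent y < t * xlnx y"
    using xlnx_tangent_line_strict[OF \<open>z > 0\<close>] \<open>z \<noteq> x\<close> \<open>z \<noteq> y\<close> assms by simp_all
  moreover have "(1 - t) * ?tangent x + t * ?tangent y = xlnx z"
    using z_def by algebra
  ultimately show ?thesis
    unfolding z_def by linarith
qed

lemma convex_on_xlnx: "convex_on {0..} xlnx"
proof (rule convex_on_linorderI)
  fix t x y :: real
  assume "0 < t" "t < 1" "x \<in> {0..}" "y \<in> {0..}" "x < y"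
  then show "xlnx ((1 - t) *\<^sub>R x + t *\<^sub>R y) \<le> (1 - t) * xlnx x + t * xlnx y"
    using xlnx_strictly_convex[of x y t] by simp
qed simp

lemma continuous_on_xlnx: "continuous_on {0..} xlnx"
proof -
  have "(xlnx \<longlongrightarrow> 0) (at_right 0)"
    unfolding filterlim_at_right_to_top
  proof (rule Lim_transform_eventually)
    show "((\<lambda>x::real. - (ln x / x)) \<longlongrightarrow> 0) at_top"
      using tendsto_minus[OF ln_x_over_x_tendsto_0] by simp
    show "\<forall>\<^sub>F x in at_top. - (ln x / x) = xlnx (inverse x)"
      using eventually_gt_at_top[of "0::real"]
      by eventually_elim (simp add: xlnx_def ln_inverse divide_inverse)
  qed
  show ?thesis
    unfolding continuous_on_eq_continuous_within
  proof
    fix x :: real assume "x \<in> {0..}"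
    show "continuous (at x within {0..}) xlnx"
    proof (cases "x = 0")
      case True
      with \<open>(xlnx \<longlongrightarrow> 0) (at_right 0)\<close> show ?thesis
        by (simp add: continuous_within at_within_Ici_at_right xlnx_def)
    next
      case False
      with \<open>x \<in> {0..}\<close> have "isCont xlnx x"
        unfolding xlnx_def by (auto intro!: continuous_intros)
      then show ?thesis
        by (rule continuous_at_imp_continuous_at_within)
    qed
  qed
qed

lemma xlnx_scale: "t > 0 \<Longrightarrow> d \<ge> 0 \<Longrightarrow> xlnx (t * d) = t * xlnx d + t * (d * ln t)"
  by (cases "d = 0") (simp_all add: xlnx_def ln_mult algebra_simps)

lemma selfpow_eq_exp_xlnx: "t \<ge> 0 \<Longrightarrow> selfpow t = exp (xlnx t)"
  unfolding selfpow_def xlnx_def by (auto simp: powr_def)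

lemma convex_on_exp_comp:
  assumes "convex_on S g"
  shows "convex_on S (\<lambda>x. exp (g x))"
proof (rule convex_onI)
  show "convex S" using assms by (rule convex_on_imp_convex)
  fix t :: real and x y assume "0 < t" "t < 1" "x \<in> S" "y \<in> S"
  then have "exp (g ((1 - t) *\<^sub>R x + t *\<^sub>R y)) \<le> exp ((1 - t) * g x + t * g y)"
    using convex_onD[OF assms] by simp
  also have "\<dots> \<le> (1 - t) * exp (g x) + t * exp (g y)"
    using convex_onD[OF exp_convex, of t "g x" "g y"] \<open>0 < t\<close> \<open>t < 1\<close> by simp
  finally show "exp (g ((1 - t) *\<^sub>R x + t *\<^sub>R y)) \<le> (1 - t) * exp (g x) + t * exp (g y)" .
qed

lemma strictly_convex_minimizer_unique:
  fixes f :: "'a::real_vector \<Rightarrow> real"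
  assumes strict: "\<And>x y. x \<in> S \<Longrightarrow> y \<in> S \<Longrightarrow> x \<noteq> y \<Longrightarrow>
      f ((1/2) *\<^sub>R x + (1/2) *\<^sub>R y) < (f x + f y) / 2"
    and "convex S" "x \<in> S" "y \<in> S" "\<forall>z\<in>S. f x \<le> f z" "\<forall>z\<in>S. f y \<le> f z"
  shows "x = y"
proof (rule ccontr)
  assume "x \<noteq> y"
  have "(1/2) *\<^sub>R x + (1/2) *\<^sub>R y \<in> S"
    using convexD[OF \<open>convex S\<close> \<open>x \<in> S\<close> \<open>y \<in> S\<close>, of "1/2" "1/2"] by simp
  with strict[OF \<open>x \<in> S\<close> \<open>y \<in> S\<close> \<open>x \<noteq> y\<close>] assms(5,6) \<open>y \<in> S\<close> show False
    by fastforce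
qed

definition slack :: "(nat \<Rightarrow> real ^ 'n) \<Rightarrow> (nat \<Rightarrow> int) \<Rightarrow> nat \<Rightarrow> real ^ 'n \<Rightarrow> real" where
  "slack v a i x = v i \<bullet> x + of_int (a i)"

lemma slack_convex_combination:
  "slack v a i ((1 - u) *\<^sub>R x + u *\<^sub>R y) = (1 - u) * slack v a i x + u * slack v a i y"
  unfolding slack_def by (simp add: inner_add_right algebra_simps)

lemma mem_polyP_iff: "x \<in> polyP r v a \<longleftrightarrow> (\<forall>i<r. slack v a i x \<ge> 0)"
  unfolding polyP_def slack_def by auto

lemma convex_polyP: "convex (polyP r v a)"
proof (rule convexI)
  fix x y and u w :: real
  assume "x \<in> polyP r v a" "y \<in> polyP r v a" "0 \<le> u" "0 \<le> w" "u + w = 1"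
  then show "u *\<^sub>R x + w *\<^sub>R y \<in> polyP r v a"
    using slack_convex_combination[of v a _ w x y]
    by (auto simp: mem_polyP_iff eq_diff_eq[symmetric])
qed

lemma bounded_polyP_slack_inj:
  assumes "bounded (polyP r v a)" "x \<in> polyP r v a" "y \<in> polyP r v a"
    and "\<forall>i<r. slack v a i x = slack v a i y"
  shows "x = y"
proof (rule ccontr)
  define w where "w = y - x"
  assume "x \<noteq> y"
  then have "norm w > 0" unfolding w_def by simp
  obtain B where B: "\<forall>z\<in>polyP r v a. norm z \<le> B"
    using assms(1) unfolding bounded_iff by blast
  have line: "x + s *\<^sub>R w \<in> polyP r v a" for s
    using assms(2,4) by (auto simp: mem_polyP_iff slack_def w_def inner_add_right inner_diff_right)
  define s where "s = (2 * B + 1) / norm w"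
  have "B \<ge> 0" using B assms(2) norm_ge_zero order_trans by blast
  then have "norm (s *\<^sub>R w) = 2 * B + 1"
    unfolding s_def using \<open>norm w > 0\<close> by simp
  moreover have "norm (s *\<^sub>R w) \<le> norm (x + s *\<^sub>R w) + norm x"
    using norm_triangle_ineq4[of "x + s *\<^sub>R w" x] by simp
  moreover have "norm (x + s *\<^sub>R w) \<le> B" "norm x \<le> B"
    using B line assms(2) by blast+
  ultimately show False
    by linarith
qed

definition log_phiA :: "nat \<Rightarrow> (nat \<Rightarrow> real ^ 'n) \<Rightarrow> (nat \<Rightarrow> int) \<Rightarrow> real ^ 'n \<Rightarrow> real" where
  "log_phiA r v a x = (\<Sum>i<r. xlnx (slack v a i x))"

lemma phiA_eq_exp_log_phiA: "x \<in> polyP r v a \<Longrightarrow> phiA r v a x = exp (log_phiA r v a x)"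
  unfolding phiA_def log_phiA_def exp_sum[OF finite_lessThan]
  by (intro prod.cong) (auto simp: mem_polyP_iff selfpow_eq_exp_xlnx slack_def)

lemma continuous_on_log_phiA: "continuous_on (polyP r v a) (log_phiA r v a)"
  unfolding log_phiA_def
proof (intro continuous_on_sum)
  fix i assume "i \<in> {..<r}"
  then have "slack v a i ` polyP r v a \<subseteq> {0..}" by (auto simp: mem_polyP_iff)
  moreover have "continuous_on (polyP r v a) (slack v a i)"
    unfolding slack_def by (intro continuous_intros)
  ultimately show "continuous_on (polyP r v a) (\<lambda>x. xlnx (slack v a i x))"
    using continuous_on_compose2[OF continuous_on_xlnx] by blast
qed

lemma convex_on_log_phiA: "convex_on (polyP r v a) (log_phiA r v a)"
proof (rule convex_onI[OF _ convex_polyP])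
  fix t :: real and x y assume "0 < t" "t < 1" "x \<in> polyP r v a" "y \<in> polyP r v a"
  then have "(\<Sum>i<r. xlnx ((1 - t) * slack v a i x + t * slack v a i y))
      \<le> (\<Sum>i<r. (1 - t) * xlnx (slack v a i x) + t * xlnx (slack v a i y))"
    by (intro sum_mono convex_onD[OF convex_on_xlnx, simplified]) (auto simp: mem_polyP_iff)
  then show "log_phiA r v a ((1 - t) *\<^sub>R x + t *\<^sub>R y)
      \<le> (1 - t) * log_phiA r v a x + t * log_phiA r v a y"
    by (simp add: log_phiA_def slack_convex_combination sum.distrib sum_distrib_left)
qed

lemma log_phiA_strictly_convex:
  assumes "bounded (polyP r v a)" "x \<in> polyP r v a" "y \<in> polyP r v a" "x \<noteq> y"
    and "0 < t" "t < 1"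
  shows "log_phiA r v a ((1 - t) *\<^sub>R x + t *\<^sub>R y) < (1 - t) * log_phiA r v a x + t * log_phiA r v a y"
proof -
  obtain i where "i < r" "slack v a i x \<noteq> slack v a i y"
    using bounded_polyP_slack_inj[OF assms(1-3)] assms(4) by blast
  with assms have "(\<Sum>j<r. xlnx ((1 - t) * slack v a j x + t * slack v a j y))
      < (\<Sum>j<r. (1 - t) * xlnx (slack v a j x) + t * xlnx (slack v a j y))"
    by (intro sum_strict_mono_ex1 bexI[of _ i] ballI convex_onD[OF convex_on_xlnx, simplified]
        xlnx_strictly_convex) (auto simp: mem_polyP_iff)
  then show ?thesis
    by (simp add: log_phiA_def slack_convex_combination sum.distrib sum_distrib_left)
qed

lemma convex_on_phiA: "convex_on (polyP r v a) (phiA r v a)"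
proof (rule convex_onI[OF _ convex_polyP])
  fix t :: real and x y assume "0 < t" "t < 1" "x \<in> polyP r v a" "y \<in> polyP r v a"
  then show "phiA r v a ((1 - t) *\<^sub>R x + t *\<^sub>R y) \<le> (1 - t) * phiA r v a x + t * phiA r v a y"
    using convex_onD[OF convex_on_exp_comp[OF convex_on_log_phiA[of r v a]], of t x y]
      convexD[OF convex_polyP[of r v a], of x y "1 - t" t]
    by (simp add: phiA_eq_exp_log_phiA)
qed

(* The term t d ln t is where the infinite slope of t ln t at 0 enters. *)
lemma log_phiA_segment_from_tight_facet:
  assumes "m \<in> polyP r v a" "y \<in> polyP r v a" "i < r" "slack v a i m = 0"
    and "0 < t" "t \<le> 1"
  shows "log_phiA r v a ((1 - t) *\<^sub>R m + t *\<^sub>R y)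
      \<le> (1 - t) * log_phiA r v a m + t * log_phiA r v a y + t * (slack v a i y * ln t)"
proof -
  have "xlnx (slack v a j ((1 - t) *\<^sub>R m + t *\<^sub>R y))
      \<le> (1 - t) * xlnx (slack v a j m) + t * xlnx (slack v a j y)
        + (if j = i then t * (slack v a i y * ln t) else 0)" if "j < r" for j
  proof (cases "j = i")
    case True
    then show ?thesis
      using assms xlnx_scale[of t "slack v a i y"]
      by (simp add: slack_convex_combination mem_polyP_iff xlnx_def)
  next
    case False
    then show ?thesis
      using assms that convex_onD[OF convex_on_xlnx, of t "slack v a j m" "slack v a j y"]
      by (simp add: slack_convex_combination mem_polyP_iff)
  qed
  then have "log_phiA r v a ((1 - t) *\<^sub>R m + t *\<^sub>R y)
      \<le> (\<Sum>j<r. (1 - t) * xlnx (slack v a j m) + t * xlnx (slack v a j y)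
        + (if j = i then t * (slack v a i y * ln t) else 0))"
    unfolding log_phiA_def by (intro sum_mono) simp
  then show ?thesis
    using assms(3) by (simp add: log_phiA_def sum.distrib sum_distrib_left)
qed

lemma tight_facet_at_log_phiA_minimizer:
  assumes m: "m \<in> polyP r v a" and min: "\<forall>x\<in>polyP r v a. log_phiA r v a m \<le> log_phiA r v a x"
    and "i < r" "slack v a i m = 0" and y: "y \<in> polyP r v a"
  shows "slack v a i y = 0"
proof (rule ccontr)
  let ?G = "log_phiA r v a"
  define d where "d = slack v a i y"
  assume "slack v a i y \<noteq> 0"
  with y \<open>i < r\<close> have "d > 0" by (auto simp: d_def mem_polyP_iff)
  define t where "t = exp ((?G m - ?G y - 1) / d)"
  have "d * ln t = ?G m - ?G y - 1"
    unfolding t_def using \<open>d > 0\<close> by simp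
  have "?G m - ?G y - 1 \<le> 0"
    using min y by fastforce
  then have "0 < t" "t \<le> 1"
    unfolding t_def using \<open>d > 0\<close> by (auto intro: divide_nonpos_pos)
  then have "?G ((1 - t) *\<^sub>R m + t *\<^sub>R y) \<le> (1 - t) * ?G m + t * ?G y + t * (d * ln t)"
    using log_phiA_segment_from_tight_facet[OF m y assms(3,4), of t] by (simp add: d_def)
  also have "\<dots> = ?G m - t"
    unfolding \<open>d * ln t = ?G m - ?G y - 1\<close> by (simp add: algebra_simps)
  finally have "?G ((1 - t) *\<^sub>R m + t *\<^sub>R y) < ?G m"
    using \<open>0 < t\<close> by simp
  moreover have "(1 - t) *\<^sub>R m + t *\<^sub>R y \<in> polyP r v a"
    using convexD[OF convex_polyP m y, of "1 - t" t] \<open>0 < t\<close> \<open>t \<le> 1\<close> by simp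
  ultimately show False
    using min by fastforce
qed

lemma rel_interior_polyP_if_tight_facets_contain_polyP:
  assumes m: "m \<in> polyP r v a"
    and tight: "\<And>i y. i < r \<Longrightarrow> slack v a i m = 0 \<Longrightarrow> y \<in> polyP r v a \<Longrightarrow> slack v a i y = 0"
  shows "m \<in> rel_interior (polyP r v a)"
proof -
  have "\<exists>e>1. (1 - e) *\<^sub>R x + e *\<^sub>R m \<in> polyP r v a" if x: "x \<in> polyP r v a" for x
  proof -
    have "\<forall>\<^sub>F e in at_right 1. 0 \<le> slack v a i ((1 - e) *\<^sub>R x + e *\<^sub>R m)" if "i < r" for i
    proof (cases "slack v a i m = 0")
      case True
      then show ?thesis
        using tight[OF that True x] by (simp add: slack_convex_combination)
    next
      case False
      with m that have "slack v a i m > 0" by (auto simp: mem_polyP_iff)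
      moreover have "((\<lambda>e. (1 - e) * slack v a i x + e * slack v a i m) \<longlongrightarrow> slack v a i m) (at_right 1)"
        by (auto intro!: tendsto_eq_intros)
      ultimately have "\<forall>\<^sub>F e in at_right 1. 0 < (1 - e) * slack v a i x + e * slack v a i m"
        by (rule order_tendstoD(1)[rotated])
      then show ?thesis
        by (auto simp: slack_convex_combination elim: eventually_mono)
    qed
    then have "\<forall>\<^sub>F e in at_right 1. \<forall>i\<in>{..<r}. 0 \<le> slack v a i ((1 - e) *\<^sub>R x + e *\<^sub>R m)"
      by (intro eventually_ball_finite) auto
    then have "\<forall>\<^sub>F e in at_right 1. 1 < e \<and> (1 - e) *\<^sub>R x + e *\<^sub>R m \<in> polyP r v a"
      using eventually_at_right_less[of 1] by eventually_elim (auto simp: mem_polyP_iff)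
    then show ?thesis
      using eventually_happens'[OF trivial_limit_at_right_real] by blast
  qed
  moreover have "polyP r v a \<noteq> {}" using m by blast
  ultimately show ?thesis
    by (simp add: convex_rel_interior_iff[OF convex_polyP])
qed

lemma log_phiA_minimizer_in_rel_interior:
  assumes "m \<in> polyP r v a" "\<forall>x\<in>polyP r v a. log_phiA r v a m \<le> log_phiA r v a x"
  shows "m \<in> rel_interior (polyP r v a)"
  using assms tight_facet_at_log_phiA_minimizer
  by (intro rel_interior_polyP_if_tight_facets_contain_polyP) blast+

lemma log_phiA_minimizer_unique:
  assumes "bounded (polyP r v a)" "x \<in> polyP r v a" "y \<in> polyP r v a"
    and "\<forall>z\<in>polyP r v a. log_phiA r v a x \<le> log_phiA r v a z"
    and "\<forall>z\<in>polyP r v a. log_phiA r v a y \<le> log_phiA r v a z"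
  shows "x = y"
proof (rule strictly_convex_minimizer_unique[OF _ convex_polyP assms(2-)])
  show "log_phiA r v a ((1/2) *\<^sub>R x' + (1/2) *\<^sub>R y') < (log_phiA r v a x' + log_phiA r v a y') / 2"
    if "x' \<in> polyP r v a" "y' \<in> polyP r v a" "x' \<noteq> y'" for x' y'
    using log_phiA_strictly_convex[OF assms(1) that, where t = "1/2"] by simp
qed

lemma phiA_minimizer_iff:
  assumes "m \<in> polyP r v a"
  shows "(\<forall>x\<in>polyP r v a. phiA r v a m \<le> phiA r v a x)
    \<longleftrightarrow> (\<forall>x\<in>polyP r v a. log_phiA r v a m \<le> log_phiA r v a x)"
  using assms by (simp add: phiA_eq_exp_log_phiA)

theorem mainTheorem2:
  fixes r :: nat and v :: "nat \<Rightarrow> real ^ 'n" and a :: "nat \<Rightarrow> int"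
  assumes integral: "\<forall>i<r. \<forall>j. v i $ j \<in> \<int>"
    and sum0: "(\<Sum>i<r. v i) = 0"
    and cpt: "compact (polyP r v a)"
    and meets: "\<forall>i<r. \<exists>x \<in> polyP r v a. v i \<bullet> x + of_int (a i) = 0"
  shows "(\<forall>x \<in> polyP r v a. phiA r v a x > 0)
      \<and> convex_on (polyP r v a) (phiA r v a)
      \<and> (\<exists>!m. m \<in> rel_interior (polyP r v a)
              \<and> (\<forall>x \<in> polyP r v a. phiA r v a m \<le> phiA r v a x))"
proof (intro conjI)
  let ?P = "polyP r v a" and ?G = "log_phiA r v a"
  show "\<forall>x \<in> ?P. phiA r v a x > 0" by (simp add: phiA_eq_exp_log_phiA)
  show "convex_on ?P (phiA r v a)" by (rule convex_on_phiA)
  have "?P \<noteq> UNIV" using compact_imp_bounded[OF cpt] by auto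
  then have "r > 0" by (auto simp: polyP_def)
  then have "?P \<noteq> {}" using meets by blast
  then obtain m where m: "m \<in> ?P" "\<forall>x\<in>?P. ?G m \<le> ?G x"
    using continuous_attains_inf[OF cpt _ continuous_on_log_phiA] by blast
  show "\<exists>!m. m \<in> rel_interior ?P \<and> (\<forall>x\<in>?P. phiA r v a m \<le> phiA r v a x)"
  proof (rule ex1I[of _ m])
    show "m \<in> rel_interior ?P \<and> (\<forall>x\<in>?P. phiA r v a m \<le> phiA r v a x)"
      using m log_phiA_minimizer_in_rel_interior phiA_minimizer_iff by blast
  next
    fix q assume "q \<in> rel_interior ?P \<and> (\<forall>x\<in>?P. phiA r v a q \<le> phiA r v a x)"
    then show "q = m"
      using log_phiA_minimizer_unique[OF compact_imp_bounded[OF cpt] _ m(1) _ m(2)]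
        phiA_minimizer_iff rel_interior_subset by blast
  qed
qed

end
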